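(* For all integers $m\ge 2$ and $n\ge 2$ there exists a proportional mechanism $(A,p)$ for the job scheduling problem over the set $\mathcal{C}$ of general instances with $m$ machines and $n$ jobs such that $A$ gives a $3/2$-approximation to the optimal makespan, i.e. $\max_{i\in[m]} c_i(A(c)_i)\le \tfrac32\,\mathrm{OPT}(c)$ for every $c\in\mathcal{C}$.
   Context: Notation: $[k]=\{1,\dots,k\}$. There are $m$ machines $[m]$ and $n$ jobs $[n]$. An instance is a matrix $c\in\mathbb{R}_{\ge0}^{m\times n}$, where $c_{i,j}$ is the cost (processing time) of job $j$ on machine $i$; for $S\subseteq[n]$, $c_i(S)=\sum_{j\in S}c_{i,j}$. The set of general instances is $\mathcal{C}=\mathbb{R}_{\ge0}^{m\times n}$. An allocation is a tuple $(X_1,\dots,X_m)$ of pairwise disjoint subsets of $[n]$ whose union is $[n]$. A mechanism $(A,p)$ over a set of instances $\mathcal{I}$ assigns to each $c\in\mathcal{I}$ an allocation $A(c)=(A(c)_1,\dots,A(c)_m)$ and payments $p(c)=(p(c)_1,\dots,p(c)_m)\in\mathbb{R}^m$ (written $A_i,p_i$ when $c$ is clear). The mechanism is proportional if for every $c\in\mathcal{I}$ and every $i\in[m]$: $c_i(A_i)-p_i\le \frac1m\sum_{j\in[m]}\big(c_i(A_j)-p_j\big)$. $\mathrm{OPT}(c)=\min_X\max_{i\in[m]}c_i(X_i)$ over all allocations $X$. An allocation function $A$ over $\mathcal{I}$ gives a $\beta$-approximation to the optimal makespan ($\beta\ge1$) if $\max_{i\in[m]}c_i(A(c)_i)\le\beta\,\mathrm{OPT}(c)$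 for all $c\in\mathcal{I}$. *)

theory Defs
  imports Complex_Main
begin

text \<open>Machines are 0..<m, jobs are 0..<n. An instance is c :: nat => nat => real,
  c i j = cost of job j on machine i; only entries with i < m, j < n matter.\<close>

type_synonym inst = "nat \<Rightarrow> nat \<Rightarrow> real"

definition is_instance :: "nat \<Rightarrow> nat \<Rightarrow> inst \<Rightarrow> bool" where
  "is_instance m n c \<longleftrightarrow> (\<forall>i<m. \<forall>j<n. 0 \<le> c i j)"

definition cost :: "inst \<Rightarrow> nat \<Rightarrow> nat set \<Rightarrow> real" where
  "cost c i S = (\<Sum>j\<in>S. c i j)"

definition is_allocation :: "nat \<Rightarrow> nat \<Rightarrow> (nat \<Rightarrow> nat set) \<Rightarrow> bool" where
  "is_allocation m n X \<longleftrightarrow>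
     (\<forall>i<m. \<forall>k<m. i \<noteq> k \<longrightarrow> X i \<inter> X k = {}) \<and> (\<Union>i<m. X i) = {..<n}"

definition makespan :: "nat \<Rightarrow> inst \<Rightarrow> (nat \<Rightarrow> nat set) \<Rightarrow> real" where
  "makespan m c X = (MAX i\<in>{..<m}. cost c i (X i))"

definition OPT :: "nat \<Rightarrow> nat \<Rightarrow> inst \<Rightarrow> real" where
  "OPT m n c = Min {makespan m c X | X. is_allocation m n X}"

definition is_mechanism ::
  "nat \<Rightarrow> nat \<Rightarrow> (inst \<Rightarrow> nat \<Rightarrow> nat set) \<Rightarrow> (inst \<Rightarrow> nat \<Rightarrow> real) \<Rightarrow> bool" where
  "is_mechanism m n A p \<longleftrightarrow> (\<forall>c. is_instance m n c \<longrightarrow> is_allocation m n (A c))"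

definition proportional ::
  "nat \<Rightarrow> nat \<Rightarrow> (inst \<Rightarrow> nat \<Rightarrow> nat set) \<Rightarrow> (inst \<Rightarrow> nat \<Rightarrow> real) \<Rightarrow> bool" where
  "proportional m n A p \<longleftrightarrow>
     (\<forall>c. is_instance m n c \<longrightarrow> (\<forall>i<m.
        cost c i (A c i) - p c i \<le> (1 / real m) * (\<Sum>j<m. cost c i (A c j) - p c j)))"

definition approx ::
  "nat \<Rightarrow> nat \<Rightarrow> real \<Rightarrow> (inst \<Rightarrow> nat \<Rightarrow> nat set) \<Rightarrow> bool" where
  "approx m n \<beta> A \<longleftrightarrow>
     (\<forall>c. is_instance m n c \<longrightarrow> makespan m c (A c) \<le> \<beta> * OPT m n c)"

end

theory Submission
  imports Defs "HOL-Library.FuncSet"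
begin

text \<open>Fix an allocation X of makespan OPT. For each k, the reflection i \<mapsto> k - i (mod m) is an
  involution of the machines; giving machine i the bundle of machine k - i costs
  \<Sum>i. c i (X (k - i)), and since for fixed i the map k \<mapsto> k - i runs through all bundles, the
  average of this swapped cost over k is (1/m) \<Sum>i. c i [n]. Fix a k at most the average. Within
  each pair {i, k - i} the two bundles can be redistributed so that both loads stay within 3/2 OPT
  and the pair costs no more than after the swap: keep the bundles, swap them, or, if one machine's
  swapped load exceeds 3/2 OPT, keep the swap for the other machine and send each job of the
  overloaded bundle to the cheaper of the two machines. The resulting allocation A has total cost
  at most (1/m) \<Sum>i. c i [n], and charging machine i the payment c i (A i) - c i [n] / m leaves it with net
  cost exactly its proportional share, while the payments sum to at most 0.\<close>

lemma allocation_subset: "is_allocation m n X \<Longrightarrow> i < m \<Longrightarrow> X i \<subseteq> {..<n}"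
  unfolding is_allocation_def by blast

lemma cost_nonneg: "is_instance m n c \<Longrightarrow> i < m \<Longrightarrow> S \<subseteq> {..<n} \<Longrightarrow> 0 \<le> cost c i S"
  unfolding is_instance_def cost_def by (intro sum_nonneg) auto

lemma sum_cost_allocation:
  assumes "is_allocation m n X"
  shows "cost c i {..<n} = (\<Sum>l<m. cost c i (X l))"
proof -
  have "cost c i (\<Union>l<m. X l) = (\<Sum>l<m. cost c i (X l))"
    unfolding cost_def using assms
    by (intro sum.UNION_disjoint)
      (auto simp: is_allocation_def intro: finite_subset[OF allocation_subset[OF assms]])
  then show ?thesis using assms unfolding is_allocation_def by simp
qed

lemma cost_le_makespan: "i < m \<Longrightarrow> cost c i (X i) \<le> makespan m c X"
  unfolding makespan_def by (intro Max_ge) auto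

lemma makespan_le: "0 < m \<Longrightarrow> (\<And>i. i < m \<Longrightarrow> cost c i (X i) \<le> B) \<Longrightarrow> makespan m c X \<le> B"
  unfolding makespan_def by (subst Max_le_iff) auto

lemma OPT_attained:
  assumes "0 < m"
  shows "\<exists>X. is_allocation m n X \<and> makespan m c X = OPT m n c"
proof -
  define S where "S = {makespan m c X | X. is_allocation m n X}"
  have "S \<subseteq> makespan m c ` (PiE {..<m} (\<lambda>_. Pow {..<n}))"
  proof
    fix s assume "s \<in> S"
    then obtain X where X: "is_allocation m n X" "s = makespan m c X" unfolding S_def by blast
    have "restrict X {..<m} \<in> PiE {..<m} (\<lambda>_. Pow {..<n})"
      using allocation_subset[OF X(1)] by auto
    moreover have "makespan m c X = makespan m c (restrict X {..<m})"
      unfolding makespan_def by (intro arg_cong[where f = Max] image_cong) auto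
    ultimately show "s \<in> makespan m c ` (PiE {..<m} (\<lambda>_. Pow {..<n}))"
      using X(2) by blast
  qed
  then have "finite S" by (rule finite_subset) (intro finite_imageI finite_PiE; simp)
  moreover have "is_allocation m n (\<lambda>i. if i = 0 then {..<n} else {})"
    unfolding is_allocation_def using assms by auto
  then have "S \<noteq> {}" unfolding S_def by blast
  ultimately have "OPT m n c \<in> S" unfolding OPT_def S_def[symmetric] by (rule Min_in)
  then show ?thesis unfolding S_def by auto
qed

lemma exists_split_bounded_by_total:
  fixes a b :: "'a \<Rightarrow> real"
  assumes "finite P" "finite Q" "P \<inter> Q = {}" "\<forall>j\<in>P \<union> Q. 0 \<le> b j" "sum b (P \<union> Q) \<le> B"
  shows "\<exists>U\<subseteq>P \<union> Q. sum a U \<le> B \<and> sum b (P \<union> Q - U) \<le> B \<and>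
           sum a U + sum b (P \<union> Q - U) \<le> sum a Q + sum b P"
proof -
  define U where "U = {j\<in>Q. a j < b j}"
  define R where "R = Q - U"
  have "U \<subseteq> P \<union> Q" unfolding U_def by auto
  have fin: "finite U" "finite R" using assms(2) unfolding U_def R_def by auto
  have "sum a U \<le> sum b U" unfolding U_def by (rule sum_mono) auto
  also have "\<dots> \<le> sum b (P \<union> Q)" using assms(1,2,4) unfolding U_def by (intro sum_mono2) auto
  finally have "sum a U \<le> B" using assms(5) by linarith
  moreover have "sum b (P \<union> Q - U) \<le> sum b (P \<union> Q)"
    using assms(1,2,4) by (intro sum_mono2) auto
  moreover have "sum b (P \<union> Q - U) = sum b P + sum b R"
    using assms(1,3) fin unfolding R_def U_def by (subst sum.union_disjoint[symmetric]) (auto intro: sum.cong)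
  moreover have "sum b R \<le> sum a R" unfolding R_def U_def by (rule sum_mono) auto
  moreover have "sum a Q = sum a U + sum a R"
    using fin unfolding R_def U_def by (subst sum.union_disjoint[symmetric]) (auto intro: sum.cong)
  ultimately show ?thesis using assms(5) \<open>U \<subseteq> P \<union> Q\<close> by (intro exI[of _ U]) auto
qed

lemma exists_two_machine_split:
  fixes a b :: "'a \<Rightarrow> real"
  assumes fin: "finite P" "finite Q" and disj: "P \<inter> Q = {}"
    and nonneg: "\<forall>j\<in>P \<union> Q. 0 \<le> a j" "\<forall>j\<in>P \<union> Q. 0 \<le> b j"
    and load: "sum a P \<le> M" "sum b Q \<le> M"
  shows "\<exists>U\<subseteq>P \<union> Q. sum a U \<le> 3/2 * M \<and> sum b (P \<union> Q - U) \<le> 3/2 * M \<and>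
           sum a U + sum b (P \<union> Q - U) \<le> sum a Q + sum b P"
proof -
  have "0 \<le> sum a P" using nonneg by (intro sum_nonneg) auto
  then have "0 \<le> M" using load by linarith
  have PQ: "P \<union> Q - P = Q" "P \<union> Q - Q = P" using disj by auto
  consider "sum a P + sum b Q \<le> sum a Q + sum b P"
    | "sum a Q \<le> 3/2 * M" "sum b P \<le> 3/2 * M"
    | "sum a Q + sum b P < 2 * M" "3/2 * M < sum a Q"
    | "sum a Q + sum b P < 2 * M" "3/2 * M < sum b P"
    using load by linarith
  then show ?thesis
  proof cases
    case 1
    then show ?thesis using load \<open>0 \<le> M\<close> PQ by (intro exI[of _ P]) auto
  next
    case 2
    then show ?thesis using PQ by (intro exI[of _ Q]) auto
  next
    case 3
    moreover have "sum b (P \<union> Q) = sum b P + sum b Q" using fin disj by (rule sum.union_disjoint)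
    ultimately have "sum b (P \<union> Q) \<le> 3/2 * M" using load by linarith
    then show ?thesis using exists_split_bounded_by_total fin disj nonneg(2) by blast
  next
    case 4
    moreover have "sum a (Q \<union> P) = sum a Q + sum a P" using fin disj by (intro sum.union_disjoint) auto
    ultimately have "sum a (Q \<union> P) \<le> 3/2 * M" using load by linarith
    then obtain V where V: "V \<subseteq> Q \<union> P" "sum b V \<le> 3/2 * M" "sum a (Q \<union> P - V) \<le> 3/2 * M"
        "sum b V + sum a (Q \<union> P - V) \<le> sum b P + sum a Q"
      using exists_split_bounded_by_total[of Q P a "3/2 * M" b] fin disj nonneg(1) by auto
    have "P \<union> Q - (Q \<union> P - V) = V" using V(1) by auto
    then show ?thesis using V by (intro exI[of _ "Q \<union> P - V"]) auto
  qed
qed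

lemma sum_le_by_involution_pairs:
  fixes g h :: "nat \<Rightarrow> real"
  assumes inv: "\<And>i. i < m \<Longrightarrow> t i < m \<and> t (t i) = i"
    and pair: "\<And>i. i < m \<Longrightarrow> g i + g (t i) \<le> h i + h (t i)"
  shows "sum g {..<m} \<le> sum h {..<m}"
proof -
  have swap: "(\<Sum>i<m. f (t i)) = sum f {..<m}" for f :: "nat \<Rightarrow> real"
    by (rule sum.reindex_bij_witness[of _ t t]) (auto simp: inv)
  have "2 * sum g {..<m} = (\<Sum>i<m. g i + g (t i))" by (simp add: sum.distrib swap)
  also have "\<dots> \<le> (\<Sum>i<m. h i + h (t i))" using pair by (intro sum_mono) auto
  also have "\<dots> = 2 * sum h {..<m}" by (simp add: sum.distrib swap)
  finally show ?thesis by simp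
qed

lemma exists_pairwise_splits:
  fixes c :: inst
  assumes fin: "\<And>i. i < m \<Longrightarrow> finite (X i)"
    and disj: "\<And>i l. i < m \<Longrightarrow> l < m \<Longrightarrow> i \<noteq> l \<Longrightarrow> X i \<inter> X l = {}"
    and nonneg: "\<And>i l j. i < m \<Longrightarrow> l < m \<Longrightarrow> j \<in> X l \<Longrightarrow> 0 \<le> c i j"
    and load: "\<And>i. i < m \<Longrightarrow> cost c i (X i) \<le> M"
  shows "\<exists>S. \<forall>i<m. \<forall>l<m. i \<noteq> l \<longrightarrow>
           S i l \<union> S l i = X i \<union> X l \<and> S i l \<inter> S l i = {} \<and> cost c i (S i l) \<le> 3/2 * M \<and>
           cost c i (S i l) + cost c l (S l i) \<le> cost c i (X l) + cost c l (X i)"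
proof -
  define split where "split i l U \<longleftrightarrow> U \<subseteq> X i \<union> X l \<and> cost c i U \<le> 3/2 * M \<and>
      cost c l (X i \<union> X l - U) \<le> 3/2 * M \<and>
      cost c i U + cost c l (X i \<union> X l - U) \<le> cost c i (X l) + cost c l (X i)" for i l U
  have "\<exists>U. split i l U" if "i < m" "l < m" "i \<noteq> l" for i l
  proof -
    have "\<forall>j\<in>X i \<union> X l. 0 \<le> c i j" "\<forall>j\<in>X i \<union> X l. 0 \<le> c l j"
      using nonneg that by auto
    moreover have "sum (c i) (X i) \<le> M" "sum (c l) (X l) \<le> M"
      using load that unfolding cost_def by auto
    ultimately show ?thesis
      using exists_two_machine_split[OF fin[OF that(1)] fin[OF that(2)] disj[OF that]]
      unfolding split_def cost_def by blast
  qed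
  then obtain U where U: "\<And>i l. i < m \<Longrightarrow> l < m \<Longrightarrow> i \<noteq> l \<Longrightarrow> split i l (U i l)"
    by metis
  \<comment> \<open>choose only for i < l and give the complement to l, so that S i l and S l i are complementary\<close>
  define S where "S i l = (if i < l then U i l else X l \<union> X i - U l i)" for i l
  have "S i l \<union> S l i = X i \<union> X l \<and> S i l \<inter> S l i = {} \<and> cost c i (S i l) \<le> 3/2 * M \<and>
      cost c i (S i l) + cost c l (S l i) \<le> cost c i (X l) + cost c l (X i)"
    if "i < m" "l < m" "i \<noteq> l" for i l
  proof (cases "i < l")
    case True
    then show ?thesis using U[OF that] unfolding S_def split_def by auto
  next
    case False
    then show ?thesis using U[of l i] that unfolding S_def split_def by (auto simp: Un_commute)
  qed
  then show ?thesis by blast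
qed

lemma is_allocation_rearrange_pairs:
  assumes X: "is_allocation m n X"
    and inv: "\<And>i. i < m \<Longrightarrow> t i < m \<and> t (t i) = i"
    and union: "\<And>i. i < m \<Longrightarrow> A i \<union> A (t i) = X i \<union> X (t i)"
    and disj: "\<And>i. i < m \<Longrightarrow> t i \<noteq> i \<Longrightarrow> A i \<inter> A (t i) = {}"
  shows "is_allocation m n A"
  unfolding is_allocation_def
proof (intro conjI allI impI)
  have X_disj: "\<And>i l. i < m \<Longrightarrow> l < m \<Longrightarrow> i \<noteq> l \<Longrightarrow> X i \<inter> X l = {}"
    and X_union: "(\<Union>i<m. X i) = {..<n}"
    using X unfolding is_allocation_def by auto
  fix i k assume ik: "i < m" "k < m" "i \<noteq> k"
  show "A i \<inter> A k = {}"
  proof (cases "k = t i")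
    case True
    with ik inv show ?thesis using disj by auto
  next
    case False
    then have "t k \<noteq> i" "t k \<noteq> t i" using ik inv by metis+
    then have "X i \<inter> X k = {}" "X i \<inter> X (t k) = {}" "X (t i) \<inter> X k = {}" "X (t i) \<inter> X (t k) = {}"
      using X_disj ik inv False by metis+
    then have "(X i \<union> X (t i)) \<inter> (X k \<union> X (t k)) = {}" by blast
    then show ?thesis using union[OF ik(1)] union[OF ik(2)] by blast
  qed
next
  have X_union: "(\<Union>i<m. X i) = {..<n}" using X unfolding is_allocation_def by auto
  show "(\<Union>i<m. A i) = {..<n}"
  proof
    show "(\<Union>i<m. A i) \<subseteq> {..<n}"
    proof (rule UN_least)
      fix i assume "i \<in> {..<m}"
      then have "A i \<subseteq> X i \<union> X (t i)" "i < m" "t i < m" using union inv by auto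
      then show "A i \<subseteq> {..<n}" using X_union by blast
    qed
    show "{..<n} \<subseteq> (\<Union>i<m. A i)"
    proof
      fix j assume "j \<in> {..<n}"
      then obtain l where "l < m" "j \<in> X l" using X_union by auto
      then have "j \<in> A l \<union> A (t l)" "t l < m" using union inv by auto
      then show "j \<in> (\<Union>i<m. A i)" using \<open>l < m\<close> by blast
    qed
  qed
qed

lemma exists_rearranged_allocation:
  assumes X: "is_allocation m n X" and inst: "is_instance m n c"
    and load: "\<And>i. i < m \<Longrightarrow> cost c i (X i) \<le> M"
    and inv: "\<And>i. i < m \<Longrightarrow> t i < m \<and> t (t i) = i"
  shows "\<exists>A. is_allocation m n A \<and> (\<forall>i<m. cost c i (A i) \<le> 3/2 * M) \<and>
           (\<Sum>i<m. cost c i (A i)) \<le> (\<Sum>i<m. cost c i (X (t i)))"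
proof -
  have "\<exists>S. \<forall>i<m. \<forall>l<m. i \<noteq> l \<longrightarrow>
      S i l \<union> S l i = X i \<union> X l \<and> S i l \<inter> S l i = {} \<and> cost c i (S i l) \<le> 3/2 * M \<and>
      cost c i (S i l) + cost c l (S l i) \<le> cost c i (X l) + cost c l (X i)"
  proof (rule exists_pairwise_splits)
    show "finite (X i)" if "i < m" for i
      using allocation_subset[OF X that] by (rule finite_subset) simp
    show "X i \<inter> X l = {}" if "i < m" "l < m" "i \<noteq> l" for i l
      using X that unfolding is_allocation_def by blast
    show "0 \<le> c i j" if "i < m" "l < m" "j \<in> X l" for i l j
      using inst allocation_subset[OF X \<open>l < m\<close>] that unfolding is_instance_def by blast
  qed (rule load)
  then obtain S where S: "\<forall>i<m. \<forall>l<m. i \<noteq> l \<longrightarrow>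
      S i l \<union> S l i = X i \<union> X l \<and> S i l \<inter> S l i = {} \<and> cost c i (S i l) \<le> 3/2 * M \<and>
      cost c i (S i l) + cost c l (S l i) \<le> cost c i (X l) + cost c l (X i)"
    by blast
  define A where "A i = (if t i = i then X i else S i (t i))" for i
  have pair: "A i \<union> A (t i) = X i \<union> X (t i) \<and> (t i \<noteq> i \<longrightarrow> A i \<inter> A (t i) = {}) \<and>
      cost c i (A i) + cost c (t i) (A (t i)) \<le> cost c i (X (t i)) + cost c (t i) (X i)" if "i < m" for i
  proof (cases "t i = i")
    case True
    then show ?thesis unfolding A_def by simp
  next
    case False
    then have "A i = S i (t i)" "A (t i) = S (t i) i" using inv[OF that] unfolding A_def by auto
    then show ?thesis using S[rule_format, of i "t i"] inv[OF that] that False by simp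
  qed
  have "is_allocation m n A"
    using X inv by (rule is_allocation_rearrange_pairs) (use pair in blast)+
  moreover have "cost c i (A i) \<le> 3/2 * M" if "i < m" for i
  proof (cases "t i = i")
    case True
    have "0 \<le> cost c i (X i)" using cost_nonneg[OF inst that allocation_subset[OF X that]] .
    then show ?thesis using load[OF that] True unfolding A_def by simp
  next
    case False
    then show ?thesis using S[rule_format, of i "t i"] inv[OF that] that unfolding A_def by simp
  qed
  moreover have "(\<Sum>i<m. cost c i (A i)) \<le> (\<Sum>i<m. cost c i (X (t i)))"
  proof (rule sum_le_by_involution_pairs[OF inv])
    fix i assume "i < m"
    then show "cost c i (A i) + cost c (t i) (A (t i)) \<le> cost c i (X (t i)) + cost c (t i) (X (t (t i)))"
      using pair[OF \<open>i < m\<close>] inv[OF \<open>i < m\<close>] by simp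
  qed
  ultimately show ?thesis by blast
qed

definition reflect :: "nat \<Rightarrow> nat \<Rightarrow> nat \<Rightarrow> nat" where
  "reflect m k i = (k + m - i) mod m"

lemma reflect_less: "0 < m \<Longrightarrow> reflect m k i < m"
  by (simp add: reflect_def)

lemma int_reflect: "i \<le> m \<Longrightarrow> int (reflect m k i) = (int k - int i) mod int m"
proof -
  assume "i \<le> m"
  then have "int (k + m - i) = (int k - int i) + int m" by simp
  then show ?thesis unfolding reflect_def by (simp add: zmod_int)
qed

lemma reflect_reflect: "i < m \<Longrightarrow> reflect m k (reflect m k i) = i"
proof -
  assume i: "i < m"
  then have "reflect m k i \<le> m" by (simp add: reflect_def)
  then have "int (reflect m k (reflect m k i)) = (int k - (int k - int i) mod int m) mod int m"
    using int_reflect[of i m k] i by (simp add: int_reflect)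
  also have "\<dots> = int i mod int m" by (simp add: mod_diff_right_eq)
  also have "\<dots> = int i" using i by simp
  finally show ?thesis by simp
qed

lemma bij_betw_reflect: "i < m \<Longrightarrow> bij_betw (\<lambda>k. reflect m k i) {..<m} {..<m}"
proof -
  assume i: "i < m"
  have "inj_on (\<lambda>k. reflect m k i) {..<m}"
  proof (rule inj_onI)
    fix k k' assume k: "k \<in> {..<m}" "k' \<in> {..<m}" and "reflect m k i = reflect m k' i"
    then have "(int k - int i) mod int m = (int k' - int i) mod int m"
      using i by (metis int_reflect less_imp_le)
    then have "int k mod int m = int k' mod int m"
      by (metis diff_add_cancel mod_add_left_eq)
    then show "k = k'" using k by simp
  qed
  moreover have "(\<lambda>k. reflect m k i) ` {..<m} \<subseteq> {..<m}" using i reflect_less by auto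
  ultimately show ?thesis unfolding bij_betw_def by (simp add: endo_inj_surj)
qed

lemma exists_reflection_below_average:
  assumes X: "is_allocation m n X" and m: "0 < m"
  shows "\<exists>k<m. (\<Sum>i<m. cost c i (X (reflect m k i))) \<le> (\<Sum>i<m. cost c i {..<n}) / real m"
proof -
  define f where "f k = (\<Sum>i<m. cost c i (X (reflect m k i)))" for k
  have "sum f {..<m} = (\<Sum>i<m. \<Sum>k<m. cost c i (X (reflect m k i)))"
    unfolding f_def by (rule sum.swap)
  also have "\<dots> = (\<Sum>i<m. \<Sum>l<m. cost c i (X l))"
    by (intro sum.cong refl sum.reindex_bij_betw bij_betw_reflect) simp
  also have "\<dots> = (\<Sum>i<m. cost c i {..<n})"
    using sum_cost_allocation[OF X] by simp
  finally have sum_f: "sum f {..<m} = (\<Sum>i<m. cost c i {..<n})" .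
  have "Min (f ` {..<m}) \<in> f ` {..<m}" using m by (intro Min_in) auto
  then obtain k where k: "k < m" "f k = Min (f ` {..<m})" by auto
  then have "f k \<le> f i" if "i < m" for i using that by simp
  then have "real m * f k \<le> sum f {..<m}"
    using sum_bounded_below[of "{..<m}" "f k" f] by simp
  then show ?thesis using k m sum_f unfolding f_def by (intro exI[of _ k]) (simp add: field_simps)
qed

lemma exists_approx_allocation_below_average:
  assumes m: "0 < m" and inst: "is_instance m n c"
  shows "\<exists>A. is_allocation m n A \<and> (\<forall>i<m. cost c i (A i) \<le> 3/2 * OPT m n c) \<and>
           (\<Sum>i<m. cost c i (A i)) \<le> (\<Sum>i<m. cost c i {..<n}) / real m"
proof -
  obtain X where X: "is_allocation m n X" "makespan m c X = OPT m n c"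
    using OPT_attained[OF m] by blast
  obtain k where "k < m"
    and k: "(\<Sum>i<m. cost c i (X (reflect m k i))) \<le> (\<Sum>i<m. cost c i {..<n}) / real m"
    using exists_reflection_below_average[OF X(1) m] by blast
  have "\<exists>A. is_allocation m n A \<and> (\<forall>i<m. cost c i (A i) \<le> 3/2 * OPT m n c) \<and>
      (\<Sum>i<m. cost c i (A i)) \<le> (\<Sum>i<m. cost c i (X (reflect m k i)))"
    using X(1) inst
  proof (rule exists_rearranged_allocation)
    show "cost c i (X i) \<le> OPT m n c" if "i < m" for i
      using cost_le_makespan[of i m c X] that X(2) by simp
    show "reflect m k i < m \<and> reflect m k (reflect m k i) = i" if "i < m" for i
      using that m by (simp add: reflect_less reflect_reflect)
  qed
  then show ?thesis using k by force
qed

lemma proportional_average_payments: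
  assumes m: "0 < m"
    and A: "\<And>c. is_instance m n c \<Longrightarrow>
      is_allocation m n (A c) \<and> (\<Sum>i<m. cost c i (A c i)) \<le> (\<Sum>i<m. cost c i {..<n}) / real m"
  shows "proportional m n A (\<lambda>c i. cost c i (A c i) - cost c i {..<n} / real m)"
  unfolding proportional_def
proof (intro allI impI)
  fix c i assume inst: "is_instance m n c" and "i < m"
  define p where "p j = cost c j (A c j) - cost c j {..<n} / real m" for j
  have "(\<Sum>j<m. p j) \<le> 0"
    using A[OF inst] unfolding p_def by (simp add: sum_subtractf sum_divide_distrib)
  moreover have "(\<Sum>j<m. cost c i (A c j) - p j) = cost c i {..<n} - (\<Sum>j<m. p j)"
    using sum_cost_allocation[of m n "A c" c i] A[OF inst] by (simp add: sum_subtractf)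
  ultimately have "cost c i {..<n} / real m \<le> (1 / real m) * (\<Sum>j<m. cost c i (A c j) - p j)"
    using m by (simp add: divide_right_mono)
  then show "cost c i (A c i) - p i \<le> (1 / real m) * (\<Sum>j<m. cost c i (A c j) - p j)"
    unfolding p_def by simp
qed

theorem theorem1:
  fixes m n :: nat
  assumes "m \<ge> 2" and "n \<ge> 2"
  shows "\<exists>A p. is_mechanism m n A p \<and> proportional m n A p \<and> approx m n (3/2) A"
proof -
  have m: "0 < m" using assms(1) by simp
  define good where "good c X \<longleftrightarrow> is_allocation m n X \<and> (\<forall>i<m. cost c i (X i) \<le> 3/2 * OPT m n c) \<and>
      (\<Sum>i<m. cost c i (X i)) \<le> (\<Sum>i<m. cost c i {..<n}) / real m" for c X
  define A where "A c = (SOME X. good c X)" for c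
  define p where "p c i = cost c i (A c i) - cost c i {..<n} / real m" for c i
  have A: "good c (A c)" if "is_instance m n c" for c
  proof -
    have "\<exists>X. good c X"
      unfolding good_def by (rule exists_approx_allocation_below_average[OF m that])
    then show ?thesis unfolding A_def by (rule someI_ex)
  qed
  have "is_mechanism m n A p"
    using A unfolding is_mechanism_def good_def by blast
  moreover have "proportional m n A p"
    unfolding p_def using m
  proof (rule proportional_average_payments)
    fix c assume "is_instance m n c"
    then show "is_allocation m n (A c) \<and> (\<Sum>i<m. cost c i (A c i)) \<le> (\<Sum>i<m. cost c i {..<n}) / real m"
      using A unfolding good_def by blast
  qed
  moreover have "approx m n (3/2) A"
    unfolding approx_def
  proof (intro allI impI)
    fix c assume "is_instance m n c"
    then show "makespan m c (A c) \<le> 3/2 * OPT m n c"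
      using A m unfolding good_def by (intro makespan_le) auto
  qed
  ultimately show ?thesis by blast
qed

end
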